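(* Every positive stochastic choice function on a finite set $X$ is an unrestricted cross-nested logit.
   Context: $X$ is a finite set, $\mathscr{A}$ the nonempty subsets; a stochastic choice function is $p:X\times\mathscr{A}\to[0,1]$ with $\sum_{a\in A}p(a,A)=1$, $p(x,A)=0$ for $x\notin A$, and (positivity) $p(a,A)>0$ for $a\in A$. $p$ is an unrestricted generalized nested logit if there exist a collection of subsets $X_1,\dots,X_K$ of $X$ (not necessarily disjoint), numbers $\alpha^k_x\ge 0$ ($k\le K$, $x\in X$) with $\sum_{k=1}^K\alpha^k_x=1$ for each $x$ and $\alpha^k_x=0$ iff $x\notin X_k$, a function $u:X\to\mathbb{R}_{++}$ and parameters $\lambda_1,\dots,\lambda_K>0$ such that for every $A\in\mathscr{A}$ and $x\in A$, $p(x,A)=\sum_{k:\,x\in A\cap X_k}\frac{(\alpha^k_x u(x))^{1/\lambda_k}}{\sum_{y\in A\cap X_k}(\alpha^k_y u(y))^{1/\lambda_k}}\cdot\frac{\Big(\sum_{y\in A\cap X_k}(\alpha^k_y u(y))^{1/\lambda_k}\Big)^{\lambda_k}}{\sum_{l:\,A\cap X_l\ne\emptyset}\Big(\sum_{z\in A\cap X_l}(\alpha^l_z u(z))^{1/\lambda_l}\Big)^{\lambda_l}}$. It is an unrestricted cross-nested logit if moreover $\lambda_k=\lambda_{k'}$ for all $k,k'\le K$. *)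

theory Defs
  imports Complex_Main
begin

definition stoch_choice :: "'a set \<Rightarrow> ('a \<Rightarrow> 'a set \<Rightarrow> real) \<Rightarrow> bool" where
  "stoch_choice X p \<longleftrightarrow>
     (\<forall>A. A \<subseteq> X \<and> A \<noteq> {} \<longrightarrow>
        (\<forall>x\<in>X. 0 \<le> p x A \<and> p x A \<le> 1) \<and>
        (\<Sum>a\<in>A. p a A) = 1 \<and>
        (\<forall>x\<in>X. x \<notin> A \<longrightarrow> p x A = 0))"

definition positive_choice :: "'a set \<Rightarrow> ('a \<Rightarrow> 'a set \<Rightarrow> real) \<Rightarrow> bool" where
  "positive_choice X p \<longleftrightarrow> (\<forall>A. A \<subseteq> X \<and> A \<noteq> {} \<longrightarrow> (\<forall>a\<in>A. p a A > 0))"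

text \<open>Nests are indexed by k < K (i.e. k = 0..K-1 instead of 1..K).\<close>
definition gnl_prob ::
  "nat \<Rightarrow> (nat \<Rightarrow> 'a set) \<Rightarrow> (nat \<Rightarrow> 'a \<Rightarrow> real) \<Rightarrow> ('a \<Rightarrow> real) \<Rightarrow> (nat \<Rightarrow> real)
     \<Rightarrow> 'a \<Rightarrow> 'a set \<Rightarrow> real" where
  "gnl_prob K N \<alpha> u lam x A =
     (let w = (\<lambda>k y. (\<alpha> k y * u y) powr (1 / lam k));
          S = (\<lambda>k. \<Sum>y\<in>A \<inter> N k. w k y);
          D = (\<Sum>l\<in>{l. l < K \<and> A \<inter> N l \<noteq> {}}. S l powr lam l)
      in \<Sum>k\<in>{k. k < K \<and> x \<in> A \<inter> N k}. (w k x / S k) * (S k powr lam k / D))"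

definition unrestricted_gnl :: "'a set \<Rightarrow> ('a \<Rightarrow> 'a set \<Rightarrow> real) \<Rightarrow> bool" where
  "unrestricted_gnl X p \<longleftrightarrow>
     (\<exists>(K::nat) (N::nat \<Rightarrow> 'a set) (\<alpha>::nat \<Rightarrow> 'a \<Rightarrow> real) (u::'a \<Rightarrow> real) (lam::nat \<Rightarrow> real).
        (\<forall>k<K. N k \<subseteq> X) \<and>
        (\<forall>k<K. \<forall>x\<in>X. \<alpha> k x \<ge> 0 \<and> (\<alpha> k x = 0 \<longleftrightarrow> x \<notin> N k)) \<and>
        (\<forall>x\<in>X. (\<Sum>k<K. \<alpha> k x) = 1) \<and>
        (\<forall>x\<in>X. u x > 0) \<and>
        (\<forall>k<K. lam k > 0) \<and>
        (\<forall>A. A \<subseteq> X \<and> A \<noteq> {} \<longrightarrow> (\<forall>x\<in>A. p x A = gnl_prob K N \<alpha> u lam x A)))"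

definition unrestricted_cnl :: "'a set \<Rightarrow> ('a \<Rightarrow> 'a set \<Rightarrow> real) \<Rightarrow> bool" where
  "unrestricted_cnl X p \<longleftrightarrow>
     (\<exists>(K::nat) (N::nat \<Rightarrow> 'a set) (\<alpha>::nat \<Rightarrow> 'a \<Rightarrow> real) (u::'a \<Rightarrow> real) (lam::nat \<Rightarrow> real).
        (\<forall>k<K. N k \<subseteq> X) \<and>
        (\<forall>k<K. \<forall>x\<in>X. \<alpha> k x \<ge> 0 \<and> (\<alpha> k x = 0 \<longleftrightarrow> x \<notin> N k)) \<and>
        (\<forall>x\<in>X. (\<Sum>k<K. \<alpha> k x) = 1) \<and>
        (\<forall>x\<in>X. u x > 0) \<and>
        (\<forall>k<K. lam k > 0) \<and>
        (\<forall>k<K. \<forall>k'<K. lam k = lam k') \<and>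
        (\<forall>A. A \<subseteq> X \<and> A \<noteq> {} \<longrightarrow> (\<forall>x\<in>A. p x A = gnl_prob K N \<alpha> u lam x A)))"

end

theory Submission
  imports Defs
begin

text \<open>If all nests share the exponent \<open>e + 1\<close> and nest \<open>j\<close> gives item \<open>y\<close> the weight \<open>a j y\<close>,
  the cross-nested logit picks \<open>x\<close> from \<open>A\<close> with probability proportional to
  \<open>\<Sum>\<^sub>j a j x * (\<Sum>\<^sub>y\<^sub>\<in>\<^sub>A a j y) ^ e\<close>.
  Use one nest for each menu \<open>C\<close> and item \<open>z \<in> C\<close>: it weights \<open>C\<close> uniformly, except for a
  boost \<open>1 + t\<close> at \<open>z\<close>, times an unknown strength. Asking these sums to equal
  \<open>M ^ card A * p x A\<close> is a square linear system for the strengths which, suitably rescaled,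
  is a small perturbation of the identity: nests on the menu \<open>A\<close> itself contribute \<open>1 / t\<close>,
  nests on smaller menus are damped by \<open>1 / M\<close>, and a nest on a menu not inside \<open>A\<close> sees
  at most \<open>card C + t - 1\<close> of its mass \<open>card C + t\<close>, so the \<open>e\<close>-th power damps it.
  As \<open>p\<close> is bounded away from \<open>0\<close>, the perturbed system has a positive solution close
  to \<open>p\<close>.\<close>

lemma abs_sum_mult_le_row_bound:
  fixes r g :: "'i \<Rightarrow> real"
  assumes "(\<Sum>j\<in>I. \<bar>r j\<bar>) \<le> \<rho>" "\<And>j. j \<in> I \<Longrightarrow> \<bar>g j\<bar> \<le> G" "0 \<le> G"
  shows "\<bar>\<Sum>j\<in>I. r j * g j\<bar> \<le> \<rho> * G"
proof -
  have "\<bar>\<Sum>j\<in>I. r j * g j\<bar> \<le> (\<Sum>j\<in>I. \<bar>r j\<bar> * G)"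
    using assms(2) by (intro order_trans[OF sum_abs] sum_mono) (simp add: abs_mult mult_left_mono)
  also have "\<dots> = (\<Sum>j\<in>I. \<bar>r j\<bar>) * G" by (simp add: sum_distrib_right)
  also have "\<dots> \<le> \<rho> * G" using assms(1,3) by (simp add: mult_right_mono)
  finally show ?thesis .
qed

definition affine_iterate :: "'i set \<Rightarrow> ('i \<Rightarrow> 'i \<Rightarrow> real) \<Rightarrow> ('i \<Rightarrow> real) \<Rightarrow> nat \<Rightarrow> 'i \<Rightarrow> real" where
  "affine_iterate I T b n = ((\<lambda>g i. b i + (\<Sum>j\<in>I. T i j * g j)) ^^ n) (\<lambda>_. 0)"

lemma affine_iterate_0 [simp]: "affine_iterate I T b 0 i = 0"
  by (simp add: affine_iterate_def)

lemma affine_iterate_Suc: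
  "affine_iterate I T b (Suc n) i = b i + (\<Sum>j\<in>I. T i j * affine_iterate I T b n j)"
  by (simp add: affine_iterate_def)

context
  fixes I :: "'i set" and T :: "'i \<Rightarrow> 'i \<Rightarrow> real" and b :: "'i \<Rightarrow> real" and \<rho> B :: real
  assumes rows: "\<And>i. i \<in> I \<Longrightarrow> (\<Sum>j\<in>I. \<bar>T i j\<bar>) \<le> \<rho>"
    and b_bound: "\<And>i. i \<in> I \<Longrightarrow> \<bar>b i\<bar> \<le> B"
    and "0 \<le> \<rho>" "\<rho> < 1" "0 \<le> B"
begin

lemma affine_iterate_bound: "i \<in> I \<Longrightarrow> \<bar>affine_iterate I T b n i\<bar> \<le> B / (1 - \<rho>)"
proof (induction n arbitrary: i)
  case 0 then show ?case using \<open>0 \<le> B\<close> \<open>\<rho> < 1\<close> by simp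
next
  case (Suc n)
  have "\<bar>affine_iterate I T b (Suc n) i\<bar> \<le> \<bar>b i\<bar> + \<bar>\<Sum>j\<in>I. T i j * affine_iterate I T b n j\<bar>"
    by (simp add: affine_iterate_Suc abs_triangle_ineq)
  also have "\<dots> \<le> B + \<rho> * (B / (1 - \<rho>))"
    using b_bound[OF Suc.prems] \<open>0 \<le> B\<close> \<open>\<rho> < 1\<close>
    by (intro add_mono abs_sum_mult_le_row_bound rows Suc) auto
  also have "\<dots> = B / (1 - \<rho>)" using \<open>\<rho> < 1\<close> by (simp add: field_simps)
  finally show ?case .
qed

lemma affine_iterate_step_bound:
  "i \<in> I \<Longrightarrow> \<bar>affine_iterate I T b (Suc n) i - affine_iterate I T b n i\<bar> \<le> \<rho> ^ n * B"
proof (induction n arbitrary: i)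
  case 0 then show ?case using b_bound by (simp add: affine_iterate_Suc)
next
  case (Suc n)
  have "affine_iterate I T b (Suc (Suc n)) i - affine_iterate I T b (Suc n) i
      = (\<Sum>j\<in>I. T i j * (affine_iterate I T b (Suc n) j - affine_iterate I T b n j))"
    by (simp add: affine_iterate_Suc sum_subtractf[symmetric] right_diff_distrib)
  also have "\<bar>\<dots>\<bar> \<le> \<rho> * (\<rho> ^ n * B)"
    using \<open>0 \<le> \<rho>\<close> \<open>0 \<le> B\<close> by (intro abs_sum_mult_le_row_bound rows Suc) auto
  finally show ?case by simp
qed

lemma affine_iterate_converges:
  assumes "i \<in> I"
  shows "(\<lambda>n. affine_iterate I T b n i) \<longlonglongrightarrow> lim (\<lambda>n. affine_iterate I T b n i)"
proof -
  have "summable (\<lambda>n. \<rho> ^ n * B)"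
    using \<open>0 \<le> \<rho>\<close> \<open>\<rho> < 1\<close> by (intro summable_mult2 summable_geometric) simp
  then have "summable (\<lambda>n. affine_iterate I T b (Suc n) i - affine_iterate I T b n i)"
    by (rule summable_comparison_test') (use affine_iterate_step_bound[OF assms] in simp)
  moreover have "(\<Sum>m<n. affine_iterate I T b (Suc m) i - affine_iterate I T b m i)
      = affine_iterate I T b n i" for n
    using sum_lessThan_telescope[of "\<lambda>m. affine_iterate I T b m i" n] by simp
  ultimately show ?thesis by (simp add: summable_iff_convergent convergent_LIMSEQ_iff)
qed

lemma fixpoint_of_row_contraction:
  obtains g where "\<And>i. i \<in> I \<Longrightarrow> g i = b i + (\<Sum>j\<in>I. T i j * g j)"
    and "\<And>i. i \<in> I \<Longrightarrow> \<bar>g i\<bar> \<le> B / (1 - \<rho>)"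
proof
  fix i assume "i \<in> I"
  have "(\<lambda>n. affine_iterate I T b (Suc n) i)
      \<longlonglongrightarrow> b i + (\<Sum>j\<in>I. T i j * lim (\<lambda>n. affine_iterate I T b n j))"
    unfolding affine_iterate_Suc by (intro tendsto_intros affine_iterate_converges)
  then show "lim (\<lambda>n. affine_iterate I T b n i)
      = b i + (\<Sum>j\<in>I. T i j * lim (\<lambda>n. affine_iterate I T b n j))"
    using LIMSEQ_Suc[OF affine_iterate_converges[OF \<open>i \<in> I\<close>]] LIMSEQ_unique by blast
  show "\<bar>lim (\<lambda>n. affine_iterate I T b n i)\<bar> \<le> B / (1 - \<rho>)"
    using affine_iterate_converges[OF \<open>i \<in> I\<close>] affine_iterate_bound[OF \<open>i \<in> I\<close>]
    by (intro LIMSEQ_le_const2[of "\<lambda>n. \<bar>affine_iterate I T b n i\<bar>"] tendsto_intros) auto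
qed

end

lemma positive_solution_of_perturbed_identity:
  fixes E :: "'i \<Rightarrow> 'i \<Rightarrow> real" and b :: "'i \<Rightarrow> real"
  assumes "0 \<le> \<rho>" "\<rho> \<le> 1 / 2"
    and rows: "\<And>i. i \<in> I \<Longrightarrow> (\<Sum>j\<in>I. \<bar>E i j\<bar>) \<le> \<rho>"
    and b_bounds: "\<And>i. i \<in> I \<Longrightarrow> 2 * \<rho> < b i \<and> b i \<le> 1"
  obtains \<gamma> where "\<And>i. i \<in> I \<Longrightarrow> 0 < \<gamma> i"
    and "\<And>i. i \<in> I \<Longrightarrow> b i = \<gamma> i + (\<Sum>j\<in>I. E i j * \<gamma> j)"
proof -
  have rows': "(\<Sum>j\<in>I. \<bar>- E i j\<bar>) \<le> \<rho>" if "i \<in> I" for i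
    using rows[OF that] by simp
  have b_abs: "\<bar>b i\<bar> \<le> 1" if "i \<in> I" for i
    using b_bounds[OF that] assms(1) by linarith
  have "\<rho> < 1" using assms(2) by simp
  obtain \<gamma> where \<gamma>_eq: "\<And>i. i \<in> I \<Longrightarrow> \<gamma> i = b i + (\<Sum>j\<in>I. - E i j * \<gamma> j)"
    and \<gamma>_bound: "\<And>i. i \<in> I \<Longrightarrow> \<bar>\<gamma> i\<bar> \<le> 1 / (1 - \<rho>)"
    using fixpoint_of_row_contraction[of I "\<lambda>i j. - E i j" \<rho> b 1,
        OF rows' b_abs assms(1) \<open>\<rho> < 1\<close> zero_le_one]
    by blast
  show thesis
  proof (rule that)
    fix i assume i: "i \<in> I"
    have "1 / (1 - \<rho>) \<le> 2" using assms(2) by (simp add: field_simps)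
    then have "\<bar>\<Sum>j\<in>I. E i j * \<gamma> j\<bar> \<le> \<rho> * 2"
      by (intro abs_sum_mult_le_row_bound[OF rows[OF i]] order_trans[OF \<gamma>_bound]) auto
    then show "0 < \<gamma> i" using \<gamma>_eq[OF i] b_bounds[OF i] by (simp add: sum_negf abs_le_iff)
    show "b i = \<gamma> i + (\<Sum>j\<in>I. E i j * \<gamma> j)" using \<gamma>_eq[OF i] by (simp add: sum_negf)
  qed
qed

lemma gnl_prob_common_exponent:
  fixes a :: "nat \<Rightarrow> 'a \<Rightarrow> real"
  assumes "finite A" "x \<in> A"
    and nonneg: "\<And>k y. k < K \<Longrightarrow> y \<in> A \<Longrightarrow> 0 \<le> a k y"
    and support: "\<And>k y. k < K \<Longrightarrow> y \<in> A \<Longrightarrow> y \<in> N k \<longleftrightarrow> a k y \<noteq> 0"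
    and root_eq: "\<And>k y. k < K \<Longrightarrow> y \<in> A \<Longrightarrow> (\<alpha> k y * u y) powr (1 / real (Suc e)) = a k y"
  shows "gnl_prob K N \<alpha> u (\<lambda>_. real (Suc e)) x A
           = (\<Sum>k<K. a k x * (\<Sum>y\<in>A. a k y) ^ e) / (\<Sum>k<K. (\<Sum>y\<in>A. a k y) ^ Suc e)"
proof -
  define S where "S k = (\<Sum>y\<in>A. a k y)" for k
  define D where "D = (\<Sum>k<K. S k ^ Suc e)"
  have S_nonneg: "0 \<le> S k" if "k < K" for k
    unfolding S_def using nonneg[OF that] by (simp add: sum_nonneg)
  have S_eq: "(\<Sum>y\<in>A \<inter> N k. (\<alpha> k y * u y) powr (1 / real (Suc e))) = S k" if "k < K" for k
  proof -
    have "(\<Sum>y\<in>A \<inter> N k. (\<alpha> k y * u y) powr (1 / real (Suc e))) = (\<Sum>y\<in>A \<inter> N k. a k y)"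
      using root_eq[OF that] by simp
    also have "\<dots> = S k"
      unfolding S_def using \<open>finite A\<close> support[OF that] by (intro sum.mono_neutral_left) auto
    finally show ?thesis .
  qed
  have S_powr: "S k powr real (Suc e) = S k ^ Suc e" if "k < K" for k
    using S_nonneg[OF that] by (rule powr_realpow') simp
  have S_zero: "S l = 0" if "l < K" "A \<inter> N l = {}" for l
    unfolding S_def using support[OF that(1)] that(2) by (intro sum.neutral) blast
  have "(\<Sum>l\<in>{l. l < K \<and> A \<inter> N l \<noteq> {}}. S l powr real (Suc e)) = D"
    unfolding D_def
  proof (rule sum.mono_neutral_cong_left)
    show "\<forall>l\<in>{..<K} - {l. l < K \<and> A \<inter> N l \<noteq> {}}. S l ^ Suc e = 0"
      using S_zero by simp
  qed (use S_powr in auto)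
  then have "gnl_prob K N \<alpha> u (\<lambda>_. real (Suc e)) x A
      = (\<Sum>k\<in>{k. k < K \<and> x \<in> A \<inter> N k}. a k x / S k * (S k powr real (Suc e) / D))"
    unfolding gnl_prob_def Let_def using S_eq root_eq \<open>x \<in> A\<close> by (intro sum.cong) simp_all
  also have "\<dots> = (\<Sum>k\<in>{k. k < K \<and> x \<in> A \<inter> N k}. a k x * S k ^ e / D)"
  proof (rule sum.cong)
    fix k assume k: "k \<in> {k. k < K \<and> x \<in> A \<inter> N k}"
    have "a k x \<le> S k"
      unfolding S_def using k nonneg \<open>finite A\<close> by (intro member_le_sum) auto
    moreover have "0 < a k x" using k nonneg[of k x] support[of k x] by auto
    ultimately have "S k \<noteq> 0" by linarith
    then show "a k x / S k * (S k powr real (Suc e) / D) = a k x * S k ^ e / D"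
      using k S_powr[of k] by simp
  qed simp
  also have "\<dots> = (\<Sum>k<K. a k x * S k ^ e) / D"
    unfolding sum_divide_distrib
    using support[of _ x] \<open>x \<in> A\<close> by (intro sum.mono_neutral_cong_left) auto
  finally show ?thesis by (simp add: S_def D_def)
qed

lemma share_formula_of_proportional:
  fixes a :: "'j \<Rightarrow> 'a \<Rightarrow> real"
  assumes "(\<Sum>y\<in>A. p y A) = 1" "0 < c" "x \<in> A"
    and proportional: "\<And>y. y \<in> A \<Longrightarrow> (\<Sum>j\<in>J. a j y * (\<Sum>z\<in>A. a j z) ^ e) = c * p y A"
  shows "p x A = (\<Sum>j\<in>J. a j x * (\<Sum>y\<in>A. a j y) ^ e) / (\<Sum>j\<in>J. (\<Sum>y\<in>A. a j y) ^ Suc e)"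
proof -
  have "(\<Sum>j\<in>J. (\<Sum>y\<in>A. a j y) ^ Suc e) = (\<Sum>j\<in>J. \<Sum>y\<in>A. a j y * (\<Sum>z\<in>A. a j z) ^ e)"
    by (simp add: sum_distrib_right)
  also have "\<dots> = (\<Sum>y\<in>A. \<Sum>j\<in>J. a j y * (\<Sum>z\<in>A. a j z) ^ e)"
    by (rule sum.swap)
  also have "\<dots> = (\<Sum>y\<in>A. c * p y A)"
    using proportional by (rule sum.cong[OF refl])
  also have "\<dots> = c"
    using assms(1) by (simp add: sum_distrib_left[symmetric])
  finally show ?thesis using proportional[OF \<open>x \<in> A\<close>] \<open>0 < c\<close> by simp
qed

lemma unrestricted_cnl_of_indexed_nest_weights:
  fixes b :: "nat \<Rightarrow> 'a \<Rightarrow> real"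
  assumes "finite X"
    and nonneg: "\<And>k y. k < K \<Longrightarrow> y \<in> X \<Longrightarrow> 0 \<le> b k y"
    and covers: "\<And>y. y \<in> X \<Longrightarrow> \<exists>k<K. 0 < b k y"
    and share: "\<And>A x. A \<subseteq> X \<Longrightarrow> x \<in> A \<Longrightarrow>
           p x A = (\<Sum>k<K. b k x * (\<Sum>y\<in>A. b k y) ^ e) / (\<Sum>k<K. (\<Sum>y\<in>A. b k y) ^ Suc e)"
  shows "unrestricted_cnl X p"
proof -
  define N where "N k = {y \<in> X. b k y \<noteq> 0}" for k
  define u where "u y = (\<Sum>k<K. b k y ^ Suc e)" for y
  define \<alpha> where "\<alpha> k y = b k y ^ Suc e / u y" for k y
  have u_pos: "0 < u y" if "y \<in> X" for y
  proof -
    obtain k where "k < K" "0 < b k y" using covers[OF \<open>y \<in> X\<close>] by blast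
    then show ?thesis
      unfolding u_def using nonneg \<open>y \<in> X\<close> by (intro sum_pos2) auto
  qed
  show ?thesis
    unfolding unrestricted_cnl_def
  proof (intro exI[of _ K] exI[of _ N] exI[of _ \<alpha>] exI[of _ u] exI[of _ "\<lambda>_. real (Suc e)"]
      conjI allI impI ballI)
    fix A x assume A: "A \<subseteq> X \<and> A \<noteq> {}" and "x \<in> A"
    have "finite A" using A assms(1) finite_subset by blast
    have "gnl_prob K N \<alpha> u (\<lambda>_. real (Suc e)) x A
        = (\<Sum>k<K. b k x * (\<Sum>y\<in>A. b k y) ^ e) / (\<Sum>k<K. (\<Sum>y\<in>A. b k y) ^ Suc e)"
    proof (rule gnl_prob_common_exponent[OF \<open>finite A\<close> \<open>x \<in> A\<close>])
      fix k y assume "k < K" "y \<in> A"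
      then have "y \<in> X" "0 \<le> b k y" using A nonneg by auto
      then show "0 \<le> b k y" "y \<in> N k \<longleftrightarrow> b k y \<noteq> 0" by (auto simp: N_def)
      have "\<alpha> k y * u y = b k y ^ Suc e" using u_pos[OF \<open>y \<in> X\<close>] by (simp add: \<alpha>_def)
      then show "(\<alpha> k y * u y) powr (1 / real (Suc e)) = b k y"
        using real_root_power_cancel[of "Suc e" "b k y"] root_powr_inverse[of "Suc e" "b k y ^ Suc e"]
          \<open>0 \<le> b k y\<close> by simp
    qed
    then show "p x A = gnl_prob K N \<alpha> u (\<lambda>_. real (Suc e)) x A"
      using share A \<open>x \<in> A\<close> by simp
  next
    fix k x assume "k < K" "x \<in> X"
    then show "0 \<le> \<alpha> k x" and "\<alpha> k x = 0 \<longleftrightarrow> x \<notin> N k"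
      using u_pos[of x] nonneg[of k x] by (auto simp: \<alpha>_def N_def)
  next
    fix x assume "x \<in> X"
    then show "(\<Sum>k<K. \<alpha> k x) = 1"
      using u_pos[of x] by (simp add: \<alpha>_def u_def sum_divide_distrib[symmetric])
  qed (auto simp: N_def u_pos)
qed

lemma unrestricted_cnl_of_nest_weights:
  fixes a :: "'j \<Rightarrow> 'a \<Rightarrow> real"
  assumes "finite X" "finite J"
    and nonneg: "\<And>j y. j \<in> J \<Longrightarrow> y \<in> X \<Longrightarrow> 0 \<le> a j y"
    and covers: "\<And>y. y \<in> X \<Longrightarrow> \<exists>j\<in>J. 0 < a j y"
    and share: "\<And>A x. A \<subseteq> X \<Longrightarrow> x \<in> A \<Longrightarrow>
           p x A = (\<Sum>j\<in>J. a j x * (\<Sum>y\<in>A. a j y) ^ e) / (\<Sum>j\<in>J. (\<Sum>y\<in>A. a j y) ^ Suc e)"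
  shows "unrestricted_cnl X p"
proof -
  obtain h where h: "bij_betw h {..<card J} J"
    using ex_bij_betw_nat_finite[OF assms(2)] by (auto simp: atLeast0LessThan)
  have reindex: "(\<Sum>k<card J. f (h k)) = (\<Sum>j\<in>J. f j)" for f :: "'j \<Rightarrow> real"
    using sum.reindex_bij_betw[OF h] .
  show ?thesis
  proof (rule unrestricted_cnl_of_indexed_nest_weights[OF assms(1), where b = "\<lambda>k. a (h k)"])
    show "0 \<le> a (h k) y" if "k < card J" "y \<in> X" for k y
      using nonneg[OF bij_betwE[OF h, rule_format] \<open>y \<in> X\<close>] that(1) by simp
    show "\<exists>k<card J. 0 < a (h k) y" if "y \<in> X" for y
      using covers[OF that] bij_betw_imp_surj_on[OF h] by (metis imageE lessThan_iff)
    show "p x A = (\<Sum>k<card J. a (h k) x * (\<Sum>y\<in>A. a (h k) y) ^ e)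
        / (\<Sum>k<card J. (\<Sum>y\<in>A. a (h k) y) ^ Suc e)" if "A \<subseteq> X" "x \<in> A" for A x
      using share[OF that] reindex[of "\<lambda>j. a j x * (\<Sum>y\<in>A. a j y) ^ e"]
        reindex[of "\<lambda>j. (\<Sum>y\<in>A. a j y) ^ Suc e"] by simp
  qed
qed

definition menu_choices :: "'a set \<Rightarrow> ('a set \<times> 'a) set" where
  "menu_choices X = (SIGMA A:{A. A \<subseteq> X \<and> A \<noteq> {}}. A)"

lemma mem_menu_choices [simp]: "(A, x) \<in> menu_choices X \<longleftrightarrow> A \<subseteq> X \<and> x \<in> A"
  by (auto simp: menu_choices_def)

lemma finite_menu_choices: "finite X \<Longrightarrow> finite (menu_choices X)"
  unfolding menu_choices_def by (intro finite_SigmaI) (auto intro: finite_subset)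

definition nest_weight :: "real \<Rightarrow> 'a set \<times> 'a \<Rightarrow> 'a \<Rightarrow> real" where
  "nest_weight t j y = (if y \<in> fst j then if y = snd j then 1 + t else 1 else 0)"

definition nest_mass :: "real \<Rightarrow> 'a set \<times> 'a \<Rightarrow> 'a set \<Rightarrow> real" where
  "nest_mass t j A = (\<Sum>y\<in>A. nest_weight t j y)"

lemma nest_weight_nonneg: "0 \<le> t \<Longrightarrow> 0 \<le> nest_weight t j y"
  by (simp add: nest_weight_def)

lemma nest_mass_nonneg: "0 \<le> t \<Longrightarrow> 0 \<le> nest_mass t j A"
  by (simp add: nest_mass_def sum_nonneg nest_weight_nonneg)

lemma nest_mass_eq_inter:
  assumes "finite A"
  shows "nest_mass t (C, z) A = (\<Sum>y\<in>A \<inter> C. nest_weight t (C, z) y)"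
  unfolding nest_mass_def using assms
  by (intro sum.mono_neutral_right) (auto simp: nest_weight_def)

lemma nest_mass_self:
  assumes "finite C" "z \<in> C"
  shows "nest_mass t (C, z) C = real (card C) + t"
proof -
  have "nest_mass t (C, z) C = (\<Sum>y\<in>C. 1 + (if y = z then t else 0))"
    unfolding nest_mass_def by (intro sum.cong) (auto simp: nest_weight_def)
  then show ?thesis using assms by (simp add: sum.distrib)
qed

lemma nest_mass_of_subset:
  assumes "finite A" "C \<subseteq> A" "z \<in> C"
  shows "nest_mass t (C, z) A = real (card C) + t"
  using nest_mass_eq_inter[OF assms(1)] nest_mass_self[of C z t, unfolded nest_mass_def] assms
  by (simp add: Int_absorb1 finite_subset)

lemma nest_mass_of_not_subset:
  assumes "finite A" "finite C" "\<not> C \<subseteq> A" "z \<in> C" "0 \<le> t"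
  shows "nest_mass t (C, z) A \<le> real (card C) + t - 1"
proof -
  obtain y0 where y0: "y0 \<in> C" "y0 \<notin> A" using assms(3) by auto
  have "nest_mass t (C, z) A \<le> (\<Sum>y\<in>C - {y0}. nest_weight t (C, z) y)"
    unfolding nest_mass_eq_inter[OF assms(1)] using assms y0
    by (intro sum_mono2) (auto simp: nest_weight_nonneg)
  also have "\<dots> = real (card C) + t - nest_weight t (C, z) y0"
    using assms y0 nest_mass_self[of C z t, unfolded nest_mass_def] by (simp add: sum_diff1)
  also have "\<dots> \<le> real (card C) + t - 1"
    using y0 assms(5) by (simp add: nest_weight_def)
  finally show ?thesis .
qed

text \<open>Give nest \<open>(C, z)\<close> the weights \<open>s * nest_weight t (C, z)\<close> with
  \<open>s ^ (e + 1) = M ^ card C * \<gamma> (C, z) / (t * (card C + t) ^ e)\<close>. Then asking the choice from \<open>A\<close>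
  to be proportional to \<open>p\<close> with factor \<open>M ^ card A\<close> is the linear system
  \<open>\<Sum>\<^sub>j choice_kernel M t e (A, x) j * \<gamma> j = p x A\<close>.\<close>

definition choice_kernel :: "real \<Rightarrow> real \<Rightarrow> nat \<Rightarrow> 'a set \<times> 'a \<Rightarrow> 'a set \<times> 'a \<Rightarrow> real" where
  "choice_kernel M t e i j =
     M ^ card (fst j) / M ^ card (fst i) * (nest_weight t j (snd i) / t)
       * (nest_mass t j (fst i) / (real (card (fst j)) + t)) ^ e"

lemma choice_kernel_nonneg: "0 < M \<Longrightarrow> 0 < t \<Longrightarrow> 0 \<le> choice_kernel M t e i j"
  by (simp add: choice_kernel_def nest_weight_nonneg nest_mass_nonneg)

lemma choice_kernel_same_menu:
  assumes "finite A" "x \<in> A" "z \<in> A" "0 < t" "0 < M"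
  shows "choice_kernel M t e (A, x) (A, z) = (if z = x then 1 else 0) + 1 / t"
proof -
  have "real (card A) + t \<noteq> 0" using assms(4) by linarith
  then show ?thesis
    using assms nest_mass_of_subset[OF assms(1) order_refl assms(3), of t]
    by (auto simp: choice_kernel_def nest_weight_def field_simps)
qed

lemma nest_mass_ratio_le:
  assumes "finite X" "A \<subseteq> X" "C \<subseteq> X" "\<not> C \<subseteq> A" "z \<in> C" "0 \<le> t"
  shows "nest_mass t (C, z) A / (real (card C) + t) \<le> 1 - 1 / (real (card X) + t)"
proof -
  have fin: "finite A" "finite C" using assms(1-3) finite_subset by auto
  then have "0 < card C" using assms(5) card_gt_0_iff by blast
  then have m_pos: "0 < real (card C) + t" using assms(6) by linarith
  have "nest_mass t (C, z) A / (real (card C) + t) \<le> (real (card C) + t - 1) / (real (card C) + t)"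
    using nest_mass_of_not_subset[OF fin assms(4,5,6)] m_pos by (intro divide_right_mono) auto
  also have "\<dots> = 1 - 1 / (real (card C) + t)" using m_pos by (simp add: diff_divide_distrib)
  also have "\<dots> \<le> 1 - 1 / (real (card X) + t)"
    using card_mono[OF assms(1,3)] m_pos by (intro diff_left_mono divide_left_mono) auto
  finally show ?thesis .
qed

lemma choice_kernel_other_menu_le:
  assumes "finite X" "(A, x) \<in> menu_choices X" "(C, z) \<in> menu_choices X" "C \<noteq> A"
    and "1 \<le> t" "1 \<le> M" "1 / M \<le> \<epsilon>" "M ^ card X * (1 - 1 / (real (card X) + t)) ^ e \<le> \<epsilon>"
  shows "choice_kernel M t e (A, x) (C, z) \<le> 2 * \<epsilon>"
proof -
  define q where "q = nest_mass t (C, z) A / (real (card C) + t)"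
  have fin: "finite A" "finite C" and CX: "C \<subseteq> X" "z \<in> C"
    using assms(1-3) finite_subset by auto
  have q_nonneg: "0 \<le> q" using assms(5) by (simp add: q_def nest_mass_nonneg)
  have "M ^ card C / M ^ card A * q ^ e \<le> \<epsilon>"
  proof (cases "C \<subseteq> A")
    case True
    then have "card C < card A" using \<open>C \<noteq> A\<close> fin psubset_card_mono by blast
    then have "M * M ^ card C \<le> M ^ card A"
      using assms(6) power_increasing[of "Suc (card C)" "card A" M] by simp
    then have "M ^ card C / M ^ card A \<le> 1 / M" using assms(6) by (simp add: field_simps)
    moreover have "q = 1" using nest_mass_of_subset[OF fin(1) True CX(2)] assms(5) by (simp add: q_def)
    ultimately show ?thesis using assms(7) by simp
  next
    case False
    have "q \<le> 1 - 1 / (real (card X) + t)"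
      unfolding q_def using assms(1,2,5) CX False by (intro nest_mass_ratio_le) auto
    then have q_pow: "q ^ e \<le> (1 - 1 / (real (card X) + t)) ^ e" using q_nonneg by (rule power_mono)
    have "M ^ card C / M ^ card A \<le> M ^ card C / 1"
      using assms(6) by (intro divide_left_mono) auto
    also have "\<dots> \<le> M ^ card X"
      using assms(6) card_mono[OF assms(1) CX(1)] by (simp add: power_increasing)
    finally have "M ^ card C / M ^ card A * q ^ e \<le> M ^ card X * (1 - 1 / (real (card X) + t)) ^ e"
      using assms(6) q_nonneg q_pow by (intro mult_mono) auto
    then show ?thesis using assms(8) by linarith
  qed
  moreover have "nest_weight t (C, z) x / t \<le> 2"
    using assms(5) by (auto simp: nest_weight_def divide_le_eq)
  moreover have "0 \<le> M ^ card C / M ^ card A * q ^ e" using assms(6) q_nonneg by simp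
  ultimately have "nest_weight t (C, z) x / t * (M ^ card C / M ^ card A * q ^ e) \<le> 2 * \<epsilon>"
    by (intro mult_mono) auto
  then show ?thesis by (simp add: choice_kernel_def q_def ac_simps)
qed

lemma choice_kernel_row_sum_le:
  assumes "finite X" "i \<in> menu_choices X"
    and "1 \<le> t" "1 \<le> M" "1 / M \<le> \<epsilon>" "M ^ card X * (1 - 1 / (real (card X) + t)) ^ e \<le> \<epsilon>"
  shows "(\<Sum>j\<in>menu_choices X. \<bar>choice_kernel M t e i j - (if j = i then 1 else 0)\<bar>)
           \<le> real (card X) / t + real (card (menu_choices X)) * (2 * \<epsilon>)"
proof -
  obtain A x where i: "i = (A, x)" "A \<subseteq> X" "x \<in> A" using assms(2) by (cases i) auto
  have finA: "finite A" using assms(1) i(2) finite_subset by blast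
  let ?I = "menu_choices X"
  have term_le: "\<bar>choice_kernel M t e i j - (if j = i then 1 else 0)\<bar>
      \<le> (if fst j = A then 1 / t else 0) + 2 * \<epsilon>" if "j \<in> ?I" for j
  proof (cases j)
    case (Pair C z)
    have "0 \<le> 1 / M" using assms(4) by simp
    then have "0 \<le> \<epsilon>" using assms(5) by linarith
    moreover have "0 \<le> choice_kernel M t e i j" using assms(3,4) by (simp add: choice_kernel_nonneg)
    ultimately show ?thesis
      using that assms i finA choice_kernel_same_menu[OF finA i(3), of z t M e]
        choice_kernel_other_menu_le[OF assms(1), of A x C z t M \<epsilon> e]
      by (auto simp: Pair)
  qed
  have "{j \<in> ?I. fst j = A} = Pair A ` A" using i by auto
  then have card_row: "card {j \<in> ?I. fst j = A} = card A" by (simp add: card_image inj_on_def)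
  have "(\<Sum>j\<in>?I. \<bar>choice_kernel M t e i j - (if j = i then 1 else 0)\<bar>)
      \<le> (\<Sum>j\<in>?I. (if fst j = A then 1 / t else 0) + 2 * \<epsilon>)"
    by (intro sum_mono term_le)
  also have "\<dots> = real (card A) / t + real (card ?I) * (2 * \<epsilon>)"
    using sum.inter_filter[OF finite_menu_choices[OF assms(1)], of "\<lambda>_. 1 / t" "\<lambda>j. fst j = A"]
    by (simp add: sum.distrib card_row sum.If_cases)
  also have "\<dots> \<le> real (card X) / t + real (card ?I) * (2 * \<epsilon>)"
    using card_mono[OF assms(1) i(2)] assms(3) by (simp add: divide_right_mono)
  finally show ?thesis .
qed
lemma positive_choice_lower_bound:
  assumes "finite X" "X \<noteq> {}" "stoch_choice X p" "positive_choice X p"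
  obtains \<delta> where "0 < \<delta>" "\<delta> \<le> 1" "\<And>A x. (A, x) \<in> menu_choices X \<Longrightarrow> \<delta> \<le> p x A \<and> p x A \<le> 1"
proof -
  let ?P = "(\<lambda>(A, x). p x A) ` menu_choices X"
  have bounds: "0 < p x A \<and> p x A \<le> 1" if "(A, x) \<in> menu_choices X" for A x
  proof -
    have "A \<subseteq> X" "A \<noteq> {}" "x \<in> A" "x \<in> X" using that by auto
    then show ?thesis
      using assms(3,4) unfolding stoch_choice_def positive_choice_def by blast
  qed
  have "finite ?P" using finite_menu_choices[OF assms(1)] by simp
  have Min_le_p: "Min ?P \<le> p x A" if "(A, x) \<in> menu_choices X" for A x
    using \<open>finite ?P\<close> that by (intro Min_le) (auto intro!: rev_image_eqI[of "(A, x)"])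
  obtain y where "y \<in> X" using assms(2) by blast
  then have "({y}, y) \<in> menu_choices X" by simp
  then have "?P \<noteq> {}" by blast
  with \<open>finite ?P\<close> have "Min ?P \<in> ?P" by (rule Min_in)
  then have "0 < Min ?P" using bounds by auto
  moreover have "Min ?P \<le> 1" using Min_le_p[of "{y}" y] bounds[of "{y}" y] \<open>y \<in> X\<close> by simp
  ultimately show thesis using Min_le_p bounds by (intro that) auto
qed

lemma choice_kernel_near_identity:
  assumes "finite X" "0 < \<rho>" "\<rho> \<le> 1"
  obtains M t e where "1 \<le> M" "1 \<le> t"
    and "\<And>i. i \<in> menu_choices X \<Longrightarrow>
           (\<Sum>j\<in>menu_choices X. \<bar>choice_kernel M t e i j - (if j = i then 1 else 0)\<bar>) \<le> \<rho>"
proof -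
  define \<epsilon> where "\<epsilon> = \<rho> / (4 * (real (card (menu_choices X)) + 1))"
  define M where "M = 1 / \<epsilon>"
  define t where "t = 2 * (real (card X) + 1) / \<rho>"
  have \<epsilon>: "0 < \<epsilon>" "\<epsilon> \<le> 1" using assms(2,3) by (simp_all add: \<epsilon>_def field_simps)
  have "1 \<le> M" using \<epsilon> by (simp add: M_def)
  have "1 \<le> t" using assms(2,3) by (simp add: t_def field_simps)
  have "0 < 1 / (real (card X) + t)" using \<open>1 \<le> t\<close> by simp
  moreover have "0 < \<epsilon> / M ^ card X" using \<epsilon> \<open>1 \<le> M\<close> by simp
  ultimately obtain e where "(1 - 1 / (real (card X) + t)) ^ e < \<epsilon> / M ^ card X"
    using real_arch_pow_inv[of "\<epsilon> / M ^ card X" "1 - 1 / (real (card X) + t)"] by auto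
  then have e: "M ^ card X * (1 - 1 / (real (card X) + t)) ^ e \<le> \<epsilon>"
    using \<open>1 \<le> M\<close> by (simp add: field_simps)
  show thesis
  proof (rule that[OF \<open>1 \<le> M\<close> \<open>1 \<le> t\<close>])
    fix i assume "i \<in> menu_choices X"
    have "real (card X) / t \<le> \<rho> / 2" using assms(2) by (simp add: t_def field_simps)
    moreover have "real (card (menu_choices X)) * (2 * \<epsilon>) \<le> \<rho> / 2"
      using assms(2) by (simp add: \<epsilon>_def field_simps)
    moreover have "1 / M \<le> \<epsilon>" by (simp add: M_def)
    ultimately show "(\<Sum>j\<in>menu_choices X. \<bar>choice_kernel M t e i j - (if j = i then 1 else 0)\<bar>) \<le> \<rho>"
      using choice_kernel_row_sum_le[OF assms(1) \<open>i \<in> menu_choices X\<close> \<open>1 \<le> t\<close> \<open>1 \<le> M\<close> _ e]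
      by linarith
  qed
qed

lemma choice_kernel_system_has_positive_solution:
  assumes "finite X" "X \<noteq> {}" "stoch_choice X p" "positive_choice X p"
  obtains M t \<gamma> e where "1 \<le> M" "1 \<le> t" "\<And>j. j \<in> menu_choices X \<Longrightarrow> 0 < \<gamma> j"
    and "\<And>A x. (A, x) \<in> menu_choices X \<Longrightarrow>
           (\<Sum>j\<in>menu_choices X. choice_kernel M t e (A, x) j * \<gamma> j) = p x A"
proof -
  let ?I = "menu_choices X"
  obtain \<delta> where "0 < \<delta>" "\<delta> \<le> 1"
    and bounds: "\<And>A x. (A, x) \<in> ?I \<Longrightarrow> \<delta> \<le> p x A \<and> p x A \<le> 1"
    by (fact positive_choice_lower_bound[OF assms])
  then have \<rho>: "0 < \<delta> / 4" "\<delta> / 4 \<le> 1" by simp_all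
  obtain M t e where "1 \<le> M" "1 \<le> t"
    and rows: "\<And>i. i \<in> ?I \<Longrightarrow> (\<Sum>j\<in>?I. \<bar>choice_kernel M t e i j - (if j = i then 1 else 0)\<bar>) \<le> \<delta> / 4"
    by (fact choice_kernel_near_identity[OF assms(1) \<rho>])
  obtain \<gamma> where \<gamma>: "\<And>i. i \<in> ?I \<Longrightarrow> 0 < \<gamma> i"
    and \<gamma>_eq: "\<And>i. i \<in> ?I \<Longrightarrow> p (snd i) (fst i)
      = \<gamma> i + (\<Sum>j\<in>?I. (choice_kernel M t e i j - (if j = i then 1 else 0)) * \<gamma> j)"
  proof (rule positive_solution_of_perturbed_identity[OF _ _ rows])
    show "2 * (\<delta> / 4) < p (snd i) (fst i) \<and> p (snd i) (fst i) \<le> 1" if "i \<in> ?I" for i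
      using bounds[of "fst i" "snd i"] that \<open>0 < \<delta>\<close> by auto
  qed (use \<open>0 < \<delta>\<close> \<open>\<delta> \<le> 1\<close> in auto)
  show thesis
  proof (rule that[OF \<open>1 \<le> M\<close> \<open>1 \<le> t\<close> \<gamma>])
    fix A x assume i: "(A, x) \<in> ?I"
    have "(\<Sum>j\<in>?I. choice_kernel M t e (A, x) j * \<gamma> j)
        = (\<Sum>j\<in>?I. (choice_kernel M t e (A, x) j - (if j = (A, x) then 1 else 0)) * \<gamma> j
            + (if j = (A, x) then \<gamma> j else 0))"
      by (intro sum.cong) (auto simp: algebra_simps)
    also have "\<dots> = p x A"
      using \<gamma>_eq[OF i] i finite_menu_choices[OF assms(1)] by (simp add: sum.distrib)
    finally show "(\<Sum>j\<in>?I. choice_kernel M t e (A, x) j * \<gamma> j) = p x A" .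
  qed
qed

lemma root_strength_term_eq_choice_kernel:
  fixes j :: "'a set \<times> 'a" and e :: nat
  assumes "0 < M" "0 < t" "0 \<le> \<gamma>"
  defines "s \<equiv> root (Suc e) (M ^ card (fst j) * \<gamma> / (t * (real (card (fst j)) + t) ^ e))"
  shows "s * nest_weight t j x * (\<Sum>z\<in>A. s * nest_weight t j z) ^ e
           = M ^ card A * (choice_kernel M t e (A, x) j * \<gamma>)"
proof -
  have "0 < real (card (fst j)) + t" using assms(2) by (simp add: add_nonneg_pos)
  then have s_pow: "s ^ Suc e = M ^ card (fst j) * \<gamma> / (t * (real (card (fst j)) + t) ^ e)"
    unfolding s_def using assms(1-3) by (intro real_root_pow_pos2) auto
  have "s * nest_weight t j x * (\<Sum>z\<in>A. s * nest_weight t j z) ^ e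
      = s ^ Suc e * nest_weight t j x * nest_mass t j A ^ e"
    by (simp add: nest_mass_def sum_distrib_left[symmetric] power_mult_distrib)
  also have "\<dots> = M ^ card A * (choice_kernel M t e (A, x) j * \<gamma>)"
    using s_pow assms(1,2) \<open>0 < real (card (fst j)) + t\<close>
    by (simp add: choice_kernel_def power_divide field_simps)
  finally show ?thesis .
qed

lemma nest_weights_of_positive_choice:
  assumes "finite X" "X \<noteq> {}" "stoch_choice X p" "positive_choice X p"
  obtains a e where "\<And>j y. j \<in> menu_choices X \<Longrightarrow> 0 \<le> a j y"
    and "\<And>y. y \<in> X \<Longrightarrow> 0 < a ({y}, y) y"
    and "\<And>A x. A \<subseteq> X \<Longrightarrow> x \<in> A \<Longrightarrow> p x A
           = (\<Sum>j\<in>menu_choices X. a j x * (\<Sum>y\<in>A. a j y) ^ e)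
               / (\<Sum>j\<in>menu_choices X. (\<Sum>y\<in>A. a j y) ^ Suc e)"
proof -
  let ?I = "menu_choices X"
  obtain M t \<gamma> e where "1 \<le> M" "1 \<le> t" and \<gamma>_pos: "\<And>j. j \<in> ?I \<Longrightarrow> 0 < \<gamma> j"
    and solves: "\<And>A x. (A, x) \<in> ?I \<Longrightarrow> (\<Sum>j\<in>?I. choice_kernel M t e (A, x) j * \<gamma> j) = p x A"
    by (fact choice_kernel_system_has_positive_solution[OF assms])
  then have "0 < M" "0 < t" by simp_all
  define s where "s j = root (Suc e) (M ^ card (fst j) * \<gamma> j / (t * (real (card (fst j)) + t) ^ e))"
    for j
  define a where "a j y = s j * nest_weight t j y" for j y
  have s_pos: "0 < s j" if "j \<in> ?I" for j
    using \<gamma>_pos[OF that] \<open>0 < M\<close> \<open>0 < t\<close> by (simp add: s_def real_root_gt_zero add_nonneg_pos)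
  show thesis
  proof (rule that)
    show "0 \<le> a j y" if "j \<in> ?I" for j y
      using s_pos[OF that] \<open>0 < t\<close> by (simp add: a_def nest_weight_nonneg)
    show "0 < a ({y}, y) y" if "y \<in> X" for y
      using s_pos[of "({y}, y)"] that \<open>0 < t\<close> by (simp add: a_def nest_weight_def)
  next
    fix A x assume "A \<subseteq> X" "x \<in> A"
    have "(\<Sum>j\<in>?I. a j y * (\<Sum>z\<in>A. a j z) ^ e) = M ^ card A * p y A" if "y \<in> A" for y
    proof -
      have "(\<Sum>j\<in>?I. a j y * (\<Sum>z\<in>A. a j z) ^ e)
          = (\<Sum>j\<in>?I. M ^ card A * (choice_kernel M t e (A, y) j * \<gamma> j))"
        unfolding a_def s_def using \<gamma>_pos \<open>0 < M\<close> \<open>0 < t\<close>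
        by (intro sum.cong refl root_strength_term_eq_choice_kernel) (auto simp: less_imp_le)
      then show ?thesis
        using solves[of A y] \<open>A \<subseteq> X\<close> \<open>y \<in> A\<close> by (simp add: sum_distrib_left[symmetric])
    qed
    moreover have "(\<Sum>y\<in>A. p y A) = 1"
      using assms(3) \<open>A \<subseteq> X\<close> \<open>x \<in> A\<close> unfolding stoch_choice_def by blast
    ultimately show "p x A
        = (\<Sum>j\<in>?I. a j x * (\<Sum>y\<in>A. a j y) ^ e) / (\<Sum>j\<in>?I. (\<Sum>y\<in>A. a j y) ^ Suc e)"
      using \<open>0 < M\<close> \<open>x \<in> A\<close> by (intro share_formula_of_proportional[where c = "M ^ card A"]) auto
  qed
qed

theorem theorem4:
  fixes X :: "'a set" and p :: "'a \<Rightarrow> 'a set \<Rightarrow> real"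
  assumes "finite X"
    and "stoch_choice X p"
    and "positive_choice X p"
  shows "unrestricted_cnl X p"
proof (cases "X = {}")
  case True
  then show ?thesis unfolding unrestricted_cnl_def by (intro exI[of _ 0]) simp
next
  case False
  obtain a e where nonneg: "\<And>j y. j \<in> menu_choices X \<Longrightarrow> 0 \<le> a j y"
    and singleton: "\<And>y. y \<in> X \<Longrightarrow> 0 < a ({y}, y) y"
    and share: "\<And>A x. A \<subseteq> X \<Longrightarrow> x \<in> A \<Longrightarrow> p x A
           = (\<Sum>j\<in>menu_choices X. a j x * (\<Sum>y\<in>A. a j y) ^ e)
               / (\<Sum>j\<in>menu_choices X. (\<Sum>y\<in>A. a j y) ^ Suc e)"
    by (fact nest_weights_of_positive_choice[OF assms(1) False assms(2,3)])
  have "\<exists>j\<in>menu_choices X. 0 < a j y" if "y \<in> X" for y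
    using singleton[OF that] that by (intro bexI[of _ "({y}, y)"]) auto
  then show ?thesis
    using unrestricted_cnl_of_nest_weights[OF assms(1) finite_menu_choices[OF assms(1)] nonneg _ share]
    by blast
qed

end
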